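(* Let $G_s$ be a selection-augmented causal DAG with treatment $X$, outcome $Y$ and selection node $S$. If $P(Y^*_{X^*})$ is naturally experimental s-recoverable in $G_s$, then $G_s$ contains no direct path (edge $Y\to S$) and no indirect path (directed path from $Y$ to $S$ through intermediate nodes) between $Y$ and $S$.
   Context: Selection-augmented graph: $G_s$ is a causal DAG over observed variables $V$ (including $X$ and $Y$) with an additional binary selection node $S$ ($S=1$ means included in the sample), with edges into $S$ from the variables influencing inclusion; each endogenous node has its own exogenous variable. Twin network: add a counterfactual copy of every endogenous node (including $S^*$), each copy sharing the exogenous parent of its original and with the same edges among copies, and remove edges into the counterfactual treatment $X^*$; $Y^*_{X^*}$ is the counterfactual outcome, with $P(Y^*_{X^*=x}=y)=P(Y=y\mid do(X=x))$. Natural experimental s-recoverability: for every experimental distribution compatible with $G_s$, $P(Y^*_{X^*}\mid S=1)=P(Y^*_{X^*})>0$. *)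

theory Defs
  imports "HOL-Probability.Probability"
begin

definition selection_dag ::
  "'v set \<Rightarrow> ('v \<times> 'v) set \<Rightarrow> 'v \<Rightarrow> 'v \<Rightarrow> 'v \<Rightarrow> bool" where
  "selection_dag N E X Y S \<longleftrightarrow>
     finite N \<and> E \<subseteq> N \<times> N \<and> acyclic E \<and>
     X \<in> N \<and> Y \<in> N \<and> S \<in> N \<and> X \<noteq> Y \<and> X \<noteq> S \<and> Y \<noteq> S \<and>
     (\<forall>v. (S, v) \<notin> E)"

text \<open>A mechanism for node v only reads the values of the parents of v
(and its own exogenous variable).\<close>
definition local_mech :: "('v \<times> 'v) set \<Rightarrow> 'v \<Rightarrow> (('v \<Rightarrow> nat) \<Rightarrow> nat \<Rightarrow> nat) \<Rightarrow> bool" where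
  "local_mech E v fv \<longleftrightarrow>
     (\<forall>w w' e. (\<forall>p. (p, v) \<in> E \<longrightarrow> w p = w' p) \<longrightarrow> fv w e = fv w' e)"

definition compatible_model ::
  "'v set \<Rightarrow> ('v \<times> 'v) set \<Rightarrow> 'v \<Rightarrow> ('v \<Rightarrow> ('v \<Rightarrow> nat) \<Rightarrow> nat \<Rightarrow> nat) \<Rightarrow> bool" where
  "compatible_model N E S f \<longleftrightarrow>
     (\<forall>v\<in>N. local_mech E v (f v)) \<and> (\<forall>w e. f S w e \<in> {0, 1})"

text \<open>Values of all endogenous variables given the exogenous assignment u
(the unique solution of the structural equations in an acyclic model).\<close>
definition solve ::
  "'v set \<Rightarrow> ('v \<Rightarrow> ('v \<Rightarrow> nat) \<Rightarrow> nat \<Rightarrow> nat) \<Rightarrow> ('v \<Rightarrow> nat) \<Rightarrow> ('v \<Rightarrow> nat)" where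
  "solve N f u = (THE w. (\<forall>v\<in>N. w v = f v w (u v)) \<and> (\<forall>v. v \<notin> N \<longrightarrow> w v = 0))"

definition do_mech ::
  "('v \<Rightarrow> ('v \<Rightarrow> nat) \<Rightarrow> nat \<Rightarrow> nat) \<Rightarrow> 'v \<Rightarrow> nat \<Rightarrow> ('v \<Rightarrow> ('v \<Rightarrow> nat) \<Rightarrow> nat \<Rightarrow> nat)" where
  "do_mech f X x = f(X := (\<lambda>_ _. x))"

definition exo :: "'v set \<Rightarrow> ('v \<Rightarrow> nat pmf) \<Rightarrow> ('v \<Rightarrow> nat) pmf" where
  "exo N q = Pi_pmf N 0 q"

definition sel_prob :: "'v set \<Rightarrow> ('v \<Rightarrow> nat pmf) \<Rightarrow> ('v \<Rightarrow> ('v \<Rightarrow> nat) \<Rightarrow> nat \<Rightarrow> nat) \<Rightarrow> 'v \<Rightarrow> real" where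
  "sel_prob N q f S = measure_pmf.prob (exo N q) {u. solve N f u S = 1}"

text \<open>Twin network: P(Y*_{X*=x} = y) -- counterfactual copy with shared exogenous
variables and X* set to x.\<close>
definition cf_prob ::
  "'v set \<Rightarrow> ('v \<Rightarrow> nat pmf) \<Rightarrow> ('v \<Rightarrow> ('v \<Rightarrow> nat) \<Rightarrow> nat \<Rightarrow> nat) \<Rightarrow> 'v \<Rightarrow> nat \<Rightarrow> 'v \<Rightarrow> nat \<Rightarrow> real" where
  "cf_prob N q f X x Y y = measure_pmf.prob (exo N q) {u. solve N (do_mech f X x) u Y = y}"

definition cf_sel_prob ::
  "'v set \<Rightarrow> ('v \<Rightarrow> nat pmf) \<Rightarrow> ('v \<Rightarrow> ('v \<Rightarrow> nat) \<Rightarrow> nat \<Rightarrow> nat) \<Rightarrow> 'v \<Rightarrow> nat \<Rightarrow> 'v \<Rightarrow> nat \<Rightarrow> 'v \<Rightarrow> real" where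
  "cf_sel_prob N q f X x Y y S = measure_pmf.prob (exo N q)
     {u. solve N (do_mech f X x) u Y = y \<and> solve N f u S = 1}"

text \<open>Natural experimental s-recoverability: for every model compatible with G_s
(with P(S=1) > 0 so conditioning is defined), P(Y*_{X*} | S=1) = P(Y*_{X*}).\<close>
definition nat_exp_s_recoverable ::
  "'v set \<Rightarrow> ('v \<times> 'v) set \<Rightarrow> 'v \<Rightarrow> 'v \<Rightarrow> 'v \<Rightarrow> bool" where
  "nat_exp_s_recoverable N E X Y S \<longleftrightarrow>
     (\<forall>q f. compatible_model N E S f \<and> sel_prob N q f S > 0 \<longrightarrow>
        (\<forall>x y. cf_sel_prob N q f X x Y y S / sel_prob N q f S = cf_prob N q f X x Y y))"

end

theory Submission
  imports Defs
begin

text \<open>If Y reaches S along a directed path, consider the model in which Y is a fair coin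
and every other node is the OR of its parents. Then S = 1 exactly when Y = 1, while the
counterfactual Y* under do(X* = 0) is still Y's coin. Hence P(Y* = 1 | S = 1) = 1 differs
from P(Y* = 1) = 1/2, contradicting s-recoverability.\<close>

definition structural_solution ::
  "'v set \<Rightarrow> ('v \<Rightarrow> ('v \<Rightarrow> nat) \<Rightarrow> nat \<Rightarrow> nat) \<Rightarrow> ('v \<Rightarrow> nat) \<Rightarrow> ('v \<Rightarrow> nat) \<Rightarrow> bool" where
  "structural_solution N f u w \<longleftrightarrow> (\<forall>v\<in>N. w v = f v w (u v)) \<and> (\<forall>v. v \<notin> N \<longrightarrow> w v = 0)"

lemma wf_if_finite_acyclic:
  assumes "finite N" "E \<subseteq> N \<times> N" "acyclic E"
  shows "wf E"
  using assms finite_acyclic_wf finite_subset by blast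

lemma structural_solution_unique:
  assumes "wf E" and local: "\<forall>v\<in>N. local_mech E v (f v)"
    and "structural_solution N f u w" "structural_solution N f u w'"
  shows "w = w'"
proof
  fix a
  show "w a = w' a"
    using \<open>wf E\<close>
  proof (induction a rule: wf_induct_rule)
    case (less v)
    show ?case
    proof (cases "v \<in> N")
      case True
      then have "f v w (u v) = f v w' (u v)"
        using local less.IH unfolding local_mech_def by blast
      then show ?thesis
        using assms(3,4) True unfolding structural_solution_def by simp
    next
      case False
      then show ?thesis using assms(3,4) unfolding structural_solution_def by simp
    qed
  qed
qed

text \<open>The solution is built by well-founded recursion along the edges; locality makes
the recursion admissible.\<close>
lemma structural_solution_exists:
  assumes "wf E" and local: "\<forall>v\<in>N. local_mech E v (f v)"
  shows "\<exists>w. structural_solution N f u w"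
proof -
  define F where "F = (\<lambda>w v. if v \<in> N then f v w (u v) else 0)"
  have "adm_wf E F"
    using local unfolding adm_wf_def F_def local_mech_def by auto
  then have fixpoint: "wfrec E F = F (wfrec E F)"
    using \<open>wf E\<close> by (rule wfrec_fixpoint[rotated])
  have "wfrec E F v = (if v \<in> N then f v (wfrec E F) (u v) else 0)" for v
    using fun_cong[OF fixpoint, of v] by (simp add: F_def)
  then have "structural_solution N f u (wfrec E F)"
    unfolding structural_solution_def by simp
  then show ?thesis by blast
qed

lemma structural_solution_solve:
  assumes "wf E" "\<forall>v\<in>N. local_mech E v (f v)"
  shows "structural_solution N f u (solve N f u)"
proof -
  obtain w where w: "structural_solution N f u w"
    using structural_solution_exists[OF assms] ..
  have "solve N f u = w"
    unfolding solve_def structural_solution_def[symmetric]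
    using w structural_solution_unique[OF assms w] by blast
  then show ?thesis using w by simp
qed

lemma solve_eq:
  assumes "wf E" "\<forall>v\<in>N. local_mech E v (f v)" "v \<in> N"
  shows "solve N f u v = f v (solve N f u) (u v)"
  using structural_solution_solve[OF assms(1,2)] assms(3)
  unfolding structural_solution_def by blast

lemma local_mech_do_mech:
  assumes "\<forall>v\<in>N. local_mech E v (f v)"
  shows "\<forall>v\<in>N. local_mech E v (do_mech f X x v)"
  using assms unfolding do_mech_def local_mech_def by simp

lemma prob_exo_component:
  assumes "finite N" "v \<in> N"
  shows "measure_pmf.prob (exo N q) {u. P (u v)} = measure_pmf.prob (q v) {a. P a}"
proof -
  have "measure_pmf.prob (exo N q) {u. P (u v)}
      = measure_pmf.prob (map_pmf (\<lambda>u. u v) (exo N q)) {a. P a}"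
    by (simp add: vimage_def)
  also have "map_pmf (\<lambda>u. u v) (exo N q) = q v"
    unfolding exo_def using Pi_pmf_component[OF assms(1), of v 0 q] assms(2) by simp
  finally show ?thesis .
qed

definition or_mech :: "('v \<times> 'v) set \<Rightarrow> 'v \<Rightarrow> 'v \<Rightarrow> ('v \<Rightarrow> nat) \<Rightarrow> nat \<Rightarrow> nat" where
  "or_mech E Y v w e =
     (if v = Y then of_bool (e = 1) else of_bool (\<exists>p. (p, v) \<in> E \<and> w p = 1))"

lemma local_mech_or_mech: "\<forall>v\<in>N. local_mech E v (or_mech E Y v)"
  unfolding local_mech_def
proof (intro ballI allI impI)
  fix v and w w' :: "'a \<Rightarrow> nat" and e :: nat
  assume "\<forall>p. (p, v) \<in> E \<longrightarrow> w p = w' p"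
  then have "(\<exists>p. (p, v) \<in> E \<and> w p = 1) \<longleftrightarrow> (\<exists>p. (p, v) \<in> E \<and> w' p = 1)"
    by auto
  then show "or_mech E Y v w e = or_mech E Y v w' e"
    by (simp add: or_mech_def)
qed

lemma compatible_model_or_mech: "compatible_model N E S (or_mech E Y)"
  unfolding compatible_model_def by (simp add: local_mech_or_mech or_mech_def)

lemma or_mech_source:
  assumes "wf E" "Y \<in> N"
  shows "solve N (or_mech E Y) u Y = of_bool (u Y = 1)"
  using solve_eq[OF assms(1) local_mech_or_mech assms(2), where u = u]
  by (simp add: or_mech_def)

lemma or_mech_zero_if_source_zero:
  assumes "wf E" "E \<subseteq> N \<times> N" "u Y \<noteq> 1"
  shows "solve N (or_mech E Y) u v = 0"
  using \<open>wf E\<close>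
proof (induction v rule: wf_induct_rule)
  case (less v)
  have sol: "structural_solution N (or_mech E Y) u (solve N (or_mech E Y) u)"
    using structural_solution_solve[OF assms(1) local_mech_or_mech] by blast
  show ?case
  proof (cases "v \<in> N")
    case True
    then show ?thesis
      using sol less.IH \<open>u Y \<noteq> 1\<close> unfolding structural_solution_def or_mech_def by auto
  next
    case False
    then show ?thesis using sol unfolding structural_solution_def by simp
  qed
qed

lemma or_mech_descendant_one_if_source_one:
  assumes "wf E" "E \<subseteq> N \<times> N" "Y \<in> N" "u Y = 1" "(Y, v) \<in> E\<^sup>+"
  shows "solve N (or_mech E Y) u v = 1"
proof -
  have propagate: "solve N (or_mech E Y) u b = 1"
    if "(a, b) \<in> E" "(Y, b) \<in> E\<^sup>+" "solve N (or_mech E Y) u a = 1" for a b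
  proof -
    have "b \<noteq> Y" "b \<in> N"
      using that(1,2) wf_acyclic[OF \<open>wf E\<close>] \<open>E \<subseteq> N \<times> N\<close> unfolding acyclic_def by auto
    then show ?thesis
      using that(1,3) solve_eq[OF \<open>wf E\<close> local_mech_or_mech \<open>b \<in> N\<close>, where u = u]
      by (auto simp: or_mech_def)
  qed
  have source: "solve N (or_mech E Y) u Y = 1"
    using or_mech_source[OF \<open>wf E\<close> \<open>Y \<in> N\<close>] \<open>u Y = 1\<close> by simp
  from \<open>(Y, v) \<in> E\<^sup>+\<close> show ?thesis
  proof (induction v rule: trancl_induct)
    case (base b)
    show ?case
      by (rule propagate[OF base r_into_trancl[OF base] source])
  next
    case (step a b)
    show ?case
      by (rule propagate[OF step.hyps(2) trancl_into_trancl[OF step.hyps] step.IH])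
  qed
qed

lemma or_mech_descendant:
  assumes "wf E" "E \<subseteq> N \<times> N" "Y \<in> N" "(Y, v) \<in> E\<^sup>+"
  shows "solve N (or_mech E Y) u v = of_bool (u Y = 1)"
  using or_mech_descendant_one_if_source_one[OF assms(1-3) _ assms(4)]
    or_mech_zero_if_source_zero[OF assms(1,2)] by auto

lemma or_mech_do_source:
  assumes "wf E" "Y \<in> N" "X \<noteq> Y"
  shows "solve N (do_mech (or_mech E Y) X x) u Y = of_bool (u Y = 1)"
proof -
  have "solve N (do_mech (or_mech E Y) X x) u Y
      = do_mech (or_mech E Y) X x Y (solve N (do_mech (or_mech E Y) X x) u) (u Y)"
    by (rule solve_eq[OF assms(1) local_mech_do_mech[OF local_mech_or_mech] assms(2)])
  then show ?thesis
    using assms(3) by (simp add: do_mech_def or_mech_def)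
qed

lemma nat_exp_s_recoverable_no_directed_path:
  assumes dag: "selection_dag N E X Y S" and rec: "nat_exp_s_recoverable N E X Y S"
  shows "(Y, S) \<notin> E\<^sup>+"
proof
  assume path: "(Y, S) \<in> E\<^sup>+"
  have fin: "finite N" and sub: "E \<subseteq> N \<times> N" and "Y \<in> N" "X \<noteq> Y"
    using dag unfolding selection_dag_def by auto
  have "wf E"
    using dag wf_if_finite_acyclic unfolding selection_dag_def by blast
  define q :: "'a \<Rightarrow> nat pmf" where "q = (\<lambda>_. pmf_of_set {0, 1})"
  define f where "f = or_mech E Y"
  have coin: "measure_pmf.prob (exo N q) {u. u Y = 1} = 1 / 2"
    using prob_exo_component[OF fin \<open>Y \<in> N\<close>, of q "\<lambda>a. a = 1"]
    by (simp add: q_def measure_pmf_of_set)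
  have S_is_coin: "solve N f u S = of_bool (u Y = 1)" for u
    unfolding f_def by (rule or_mech_descendant[OF \<open>wf E\<close> sub \<open>Y \<in> N\<close> path])
  have Y_cf_is_coin: "solve N (do_mech f X 0) u Y = of_bool (u Y = 1)" for u
    unfolding f_def by (rule or_mech_do_source[OF \<open>wf E\<close> \<open>Y \<in> N\<close> \<open>X \<noteq> Y\<close>])
  have sel: "sel_prob N q f S = 1 / 2"
    unfolding sel_prob_def S_is_coin using coin by simp
  have cf_sel: "cf_sel_prob N q f X 0 Y 1 S = 1 / 2"
    unfolding cf_sel_prob_def S_is_coin Y_cf_is_coin using coin by simp
  have cf: "cf_prob N q f X 0 Y 1 = 1 / 2"
    unfolding cf_prob_def Y_cf_is_coin using coin by simp
  have "compatible_model N E S f"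
    unfolding f_def by (rule compatible_model_or_mech)
  moreover have "sel_prob N q f S > 0"
    unfolding sel by simp
  ultimately have "cf_sel_prob N q f X 0 Y 1 S / sel_prob N q f S = cf_prob N q f X 0 Y 1"
    using rec unfolding nat_exp_s_recoverable_def by blast
  then show False
    unfolding sel cf_sel cf by simp
qed

theorem lemma3:
  assumes "selection_dag N E X Y S"
    and "nat_exp_s_recoverable N E X Y S"
  shows "(Y, S) \<notin> E \<and> \<not> (\<exists>Z. (Y, Z) \<in> E\<^sup>+ \<and> (Z, S) \<in> E\<^sup>+)"
  using nat_exp_s_recoverable_no_directed_path[OF assms] by (meson r_into_trancl' trancl_trans)

end
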